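(* Let $M,N\in\mathbb N$ be arbitrary and $T\in(0,\infty)$; let $g$ and $u_0$ be as in the context, and assume moreover $u_0(x)\ge0$ for all $x\in[0,1]$. Let $u_0^{\rm LT},\dots,u_M^{\rm LT}$ be given by the Lie–Trotter splitting scheme described in the context, with $h=1/N$, $\tau=T/M$, and initial value $u_{0,n}^{\rm LT}=u_0(x_n)\ge0$. Then, almost surely, $u_{m,n}^{\rm LT}\ge0$ for all $m\in\{1,\dots,M\}$ and all $n\in\{1,\dots,N-1\}$.
   Context: $W$ is an $\mathcal F_t$-adapted Brownian sheet on $[0,T]\times[0,1]$ (centered Gaussian field with covariance $(t\wedge s)(x\wedge y)$). The map $g:\mathbb R\to\mathbb R$ is of class $\mathcal C^1$, globally Lipschitz, with $g(0)=0$; define $f:\mathbb R\to\mathbb R$ by $f(v)=g(v)/v$ for $v\ne0$ and $f(0)=g'(0)$ (so $g(v)=vf(v)$ and $f$ is bounded and continuous). The initial value $u_0:[0,1]\to\mathbb R$ is of class $\mathcal C^3$ with $u_0(0)=u_0(1)=0$. Let $h=1/N$, $x_n=nh$ ($0\le n\le N$), $\tau=T/M$, $t_m=m\tau$. Let $D^N$ be the $(N-1)\times(N-1)$ tridiagonal matrix with $-2$ on the diagonal and $1$ on the sub- and super-diagonals. Let $W_n^N(t)=\sqrt N\,(W(t,x_{n+1})-W(t,x_n))$ and $\Delta_{m,n}W=W_n^N(t_{m+1})-W_n^N(t_m)$ for $1\le n\le N-1$. The Lie–Trotter splitting scheme is: $u_{0,n}^{\rm LT}=u_0(x_n)$ for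 $1\le n\le N-1$, and for $0\le m\le M-1$, $$u_{m+1}^{\rm LT}=e^{\tau N^2D^N}\Big(\exp\big(\sqrt N f(u_{m,n}^{\rm LT})\Delta_{m,n}W-\tfrac{N f(u_{m,n}^{\rm LT})^2\tau}{2}\big)u_{m,n}^{\rm LT}\Big)_{1\le n\le N-1},$$ where $u_m^{\rm LT}=(u_{m,n}^{\rm LT})_{1\le n\le N-1}\in\mathbb R^{N-1}$; by convention $u_{m,0}^{\rm LT}=u_{m,N}^{\rm LT}=0$. *)

theory Defs
  imports "HOL-Probability.Probability"
begin

text \<open>Matrices of size (N-1)x(N-1), indexed by {1..N-1}, as functions nat => nat => real.\<close>

definition DN :: "nat \<Rightarrow> nat \<Rightarrow> nat \<Rightarrow> real" where
  "DN N i j = (if i = j then -2 else if i = j + 1 \<or> j = i + 1 then 1 else 0)"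

definition mat_mul :: "nat \<Rightarrow> (nat \<Rightarrow> nat \<Rightarrow> real) \<Rightarrow> (nat \<Rightarrow> nat \<Rightarrow> real) \<Rightarrow> nat \<Rightarrow> nat \<Rightarrow> real" where
  "mat_mul N A B i j = (\<Sum>k\<in>{1..N-1}. A i k * B k j)"

primrec mat_pow :: "nat \<Rightarrow> (nat \<Rightarrow> nat \<Rightarrow> real) \<Rightarrow> nat \<Rightarrow> nat \<Rightarrow> nat \<Rightarrow> real" where
  "mat_pow N A 0 = (\<lambda>i j. if i = j then 1 else 0)"
| "mat_pow N A (Suc k) = mat_mul N A (mat_pow N A k)"

definition mat_exp :: "nat \<Rightarrow> (nat \<Rightarrow> nat \<Rightarrow> real) \<Rightarrow> nat \<Rightarrow> nat \<Rightarrow> real" where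
  "mat_exp N A i j = (\<Sum>k. mat_pow N A k i j / fact k)"

definition mat_vec :: "nat \<Rightarrow> (nat \<Rightarrow> nat \<Rightarrow> real) \<Rightarrow> (nat \<Rightarrow> real) \<Rightarrow> nat \<Rightarrow> real" where
  "mat_vec N A v i = (\<Sum>j\<in>{1..N-1}. A i j * v j)"

definition f_of :: "(real \<Rightarrow> real) \<Rightarrow> real \<Rightarrow> real" where
  "f_of g v = (if v = 0 then deriv g 0 else g v / v)"

definition WN :: "nat \<Rightarrow> (real \<Rightarrow> real \<Rightarrow> real) \<Rightarrow> nat \<Rightarrow> real \<Rightarrow> real" where
  "WN N w n t = sqrt (real N) * (w t (real (n + 1) / real N) - w t (real n / real N))"

definition DeltaW :: "nat \<Rightarrow> nat \<Rightarrow> real \<Rightarrow> (real \<Rightarrow> real \<Rightarrow> real) \<Rightarrow> nat \<Rightarrow> nat \<Rightarrow> real" where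
  "DeltaW N M T w m n =
     WN N w n (real (Suc m) * (T / real M)) - WN N w n (real m * (T / real M))"

text \<open>Lie--Trotter scheme along a path w; u_m as a vector indexed by {1..N-1}
  (value 0 outside this range, matching the boundary convention).\<close>
primrec LT :: "nat \<Rightarrow> nat \<Rightarrow> real \<Rightarrow> (real \<Rightarrow> real) \<Rightarrow> (real \<Rightarrow> real) \<Rightarrow> (real \<Rightarrow> real \<Rightarrow> real)
    \<Rightarrow> nat \<Rightarrow> nat \<Rightarrow> real" where
  "LT N M T g u0 w 0 = (\<lambda>n. if 1 \<le> n \<and> n \<le> N - 1 then u0 (real n / real N) else 0)"
| "LT N M T g u0 w (Suc m) =
     (let tau = T / real M; u = LT N M T g u0 w m;
          v = (\<lambda>n. if 1 \<le> n \<and> n \<le> N - 1 then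
                exp (sqrt (real N) * f_of g (u n) * DeltaW N M T w m n
                     - real N * (f_of g (u n))\<^sup>2 * tau / 2) * u n else 0);
          E = mat_exp N (\<lambda>i j. tau * (real N)\<^sup>2 * DN N i j)
      in (\<lambda>n. if 1 \<le> n \<and> n \<le> N - 1 then mat_vec N E v n else 0))"

text \<open>Centered Gaussian field indexed by I with covariance C: every finite linear
  combination is centered normal with the variance dictated by C (degenerate
  Gaussian = a.s. zero when that variance is 0).\<close>
definition centered_gaussian_field ::
  "'a measure \<Rightarrow> 'i set \<Rightarrow> ('i \<Rightarrow> 'a \<Rightarrow> real) \<Rightarrow> ('i \<Rightarrow> 'i \<Rightarrow> real) \<Rightarrow> bool" where
  "centered_gaussian_field P I X C \<longleftrightarrow>
     (\<forall>i\<in>I. X i \<in> borel_measurable P) \<and>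
     (\<forall>(k::nat) (p::nat \<Rightarrow> 'i) (c::nat \<Rightarrow> real). (\<forall>l<k. p l \<in> I) \<longrightarrow>
        (let Y = (\<lambda>\<omega>. \<Sum>l<k. c l * X (p l) \<omega>);
             v = (\<Sum>l<k. \<Sum>l'<k. c l * c l' * C (p l) (p l'))
         in if v = 0 then (AE \<omega> in P. Y \<omega> = 0)
            else distributed P lborel Y (normal_density 0 (sqrt v))))"

definition adapted_brownian_sheet ::
  "'a measure \<Rightarrow> (real \<Rightarrow> 'a measure) \<Rightarrow> real \<Rightarrow> (real \<Rightarrow> real \<Rightarrow> 'a \<Rightarrow> real) \<Rightarrow> bool" where
  "adapted_brownian_sheet P F T W \<longleftrightarrow>
     (\<forall>t. subalgebra P (F t)) \<and> (\<forall>s t. s \<le> t \<longrightarrow> sets (F s) \<subseteq> sets (F t)) \<and>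
     (\<forall>t\<in>{0..T}. \<forall>x\<in>{0..1}. (\<lambda>\<omega>. W t x \<omega>) \<in> borel_measurable (F t)) \<and>
     centered_gaussian_field P ({0..T} \<times> {0..1}) (\<lambda>(t, x) \<omega>. W t x \<omega>)
       (\<lambda>(t, x) (s, y). min t s * min x y)"

definition C3_on_unit :: "(real \<Rightarrow> real) \<Rightarrow> bool" where
  "C3_on_unit u \<longleftrightarrow> (\<exists>d1 d2 d3. (\<forall>x\<in>{0..1}.
      (u has_real_derivative d1 x) (at x within {0..1}) \<and>
      (d1 has_real_derivative d2 x) (at x within {0..1}) \<and>
      (d2 has_real_derivative d3 x) (at x within {0..1})) \<and> continuous_on {0..1} d3)"

end

theory Submission
  imports Defs
begin

text \<open>The statement holds for every path of the noise, not only almost surely. The stochastic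
  substep multiplies each component of \<open>u\<^sub>m\<close> by a positive exponential factor, and the
  deterministic substep applies \<open>exp(\<tau>N\<^sup>2D\<^sup>N)\<close>, which is entrywise nonnegative: writing
  \<open>\<tau>N\<^sup>2D\<^sup>N = B - cI\<close> with \<open>B \<ge> 0\<close> entrywise, the binomial theorem for the commuting
  summands gives \<open>exp(\<tau>N\<^sup>2D\<^sup>N) = e\<^sup>-\<^sup>c exp(B)\<close>, and every power of \<open>B\<close> is nonnegative.\<close>

lemma sum_binomial_pascal:
  fixes b :: "nat \<Rightarrow> real" and e :: real
  shows "(\<Sum>p\<le>k. of_nat (k choose p) * e^p * b (Suc k - p)) +
         (\<Sum>p\<le>k. of_nat (k choose p) * e^(Suc p) * b (k - p)) =
         (\<Sum>p\<le>Suc k. of_nat (Suc k choose p) * e^p * b (Suc k - p))"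
proof -
  have split_Suc: "(\<Sum>p\<le>Suc k. of_nat (Suc k choose p) * e^p * b (Suc k - p)) =
      b (Suc k) + (\<Sum>p\<le>k. of_nat (Suc k choose Suc p) * e^(Suc p) * b (k - p))"
    by (subst sum.atMost_Suc_shift) simp
  have pascal: "(\<Sum>p\<le>k. of_nat (Suc k choose Suc p) * e^(Suc p) * b (k - p)) =
      (\<Sum>p\<le>k. of_nat (k choose p) * e^(Suc p) * b (k - p)) +
      (\<Sum>p\<le>k. of_nat (k choose Suc p) * e^(Suc p) * b (k - p))"
    by (simp add: sum.distrib[symmetric] algebra_simps)
  have split_k: "(\<Sum>p\<le>Suc k. of_nat (k choose p) * e^p * b (Suc k - p)) =
      b (Suc k) + (\<Sum>p\<le>k. of_nat (k choose Suc p) * e^(Suc p) * b (k - p))"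
    by (subst sum.atMost_Suc_shift) simp
  have drop_last: "(\<Sum>p\<le>Suc k. of_nat (k choose p) * e^p * b (Suc k - p)) =
      (\<Sum>p\<le>k. of_nat (k choose p) * e^p * b (Suc k - p))"
    by simp
  show ?thesis using split_Suc pascal split_k drop_last by linarith
qed

lemma mat_pow_add_diag:
  assumes AB: "\<And>i l. i \<in> {1..N-1} \<Longrightarrow> A i l = B i l + (if i = l then e else 0)"
    and i: "i \<in> {1..N-1}"
  shows "mat_pow N A k i j = (\<Sum>p\<le>k. of_nat (k choose p) * e^p * mat_pow N B (k - p) i j)"
  using i
proof (induction k arbitrary: i)
  case 0
  then show ?case by simp
next
  case (Suc k)
  have "mat_pow N A (Suc k) i j = (\<Sum>l\<in>{1..N-1}. A i l * mat_pow N A k l j)"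
    by (simp add: mat_mul_def)
  also have "\<dots> = (\<Sum>l\<in>{1..N-1}. B i l * mat_pow N A k l j + (if i = l then e else 0) * mat_pow N A k l j)"
    using AB[OF Suc.prems] by (simp add: algebra_simps)
  also have "\<dots> = (\<Sum>l\<in>{1..N-1}. B i l * mat_pow N A k l j) + e * mat_pow N A k i j"
  proof -
    have "(\<Sum>l\<in>{1..N-1}. (if i = l then e else 0) * mat_pow N A k l j) =
        (\<Sum>l\<in>{1..N-1}. if i = l then e * mat_pow N A k l j else 0)"
      by (intro sum.cong) auto
    also have "\<dots> = e * mat_pow N A k i j" using Suc.prems by (simp add: sum.delta)
    finally show ?thesis by (simp add: sum.distrib)
  qed
  also have "(\<Sum>l\<in>{1..N-1}. B i l * mat_pow N A k l j) =
      (\<Sum>l\<in>{1..N-1}. \<Sum>p\<le>k. B i l * (of_nat (k choose p) * e^p * mat_pow N B (k - p) l j))"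
    using Suc.IH by (simp add: sum_distrib_left)
  also have "\<dots> = (\<Sum>p\<le>k. of_nat (k choose p) * e^p * (\<Sum>l\<in>{1..N-1}. B i l * mat_pow N B (k - p) l j))"
    by (subst sum.swap) (simp add: sum_distrib_left algebra_simps)
  also have "\<dots> = (\<Sum>p\<le>k. of_nat (k choose p) * e^p * mat_pow N B (Suc k - p) i j)"
    by (intro sum.cong refl) (simp add: Suc_diff_le mat_mul_def)
  also have "e * mat_pow N A k i j = (\<Sum>p\<le>k. of_nat (k choose p) * e^(Suc p) * mat_pow N B (k - p) i j)"
    using Suc.IH[OF Suc.prems] by (simp add: sum_distrib_left algebra_simps)
  finally show ?case using sum_binomial_pascal[of k e "\<lambda>q. mat_pow N B q i j"] by simp
qed

lemma mat_entries_bounded: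
  fixes A :: "nat \<Rightarrow> nat \<Rightarrow> real" and N :: nat
  shows "\<exists>c\<ge>0. \<forall>i\<in>{1..N-1}. \<forall>l\<in>{1..N-1}. \<bar>A i l\<bar> \<le> (c::real)"
proof (intro exI conjI ballI)
  let ?c = "\<Sum>i\<in>{1..N-1}. \<Sum>l\<in>{1..N-1}. \<bar>A i l\<bar>"
  show "0 \<le> ?c" by (intro sum_nonneg) auto
  fix i l assume "i \<in> {1..N-1}" "l \<in> {1..N-1}"
  then have "\<bar>A i l\<bar> \<le> (\<Sum>l\<in>{1..N-1}. \<bar>A i l\<bar>)"
    by (intro member_le_sum) auto
  also have "\<dots> \<le> ?c"
    using \<open>i \<in> {1..N-1}\<close> by (intro member_le_sum sum_nonneg) auto
  finally show "\<bar>A i l\<bar> \<le> ?c" .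
qed

lemma mat_pow_abs_le:
  assumes "\<And>i l. i \<in> {1..N-1} \<Longrightarrow> l \<in> {1..N-1} \<Longrightarrow> \<bar>A i l\<bar> \<le> c" and "0 \<le> c"
    and "i \<in> {1..N-1}"
  shows "\<bar>mat_pow N A k i j\<bar> \<le> (real (N-1) * c)^k"
  using assms(3)
proof (induction k arbitrary: i)
  case 0
  then show ?case by simp
next
  case (Suc k)
  have "\<bar>mat_pow N A (Suc k) i j\<bar> \<le> (\<Sum>l\<in>{1..N-1}. \<bar>A i l\<bar> * \<bar>mat_pow N A k l j\<bar>)"
    unfolding mat_pow.simps mat_mul_def by (rule order_trans[OF sum_abs]) (simp add: abs_mult)
  also have "\<dots> \<le> (\<Sum>l\<in>{1..N-1}. c * (real (N-1) * c)^k)"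
    by (intro sum_mono mult_mono) (use Suc assms in auto)
  also have "\<dots> = (real (N-1) * c)^Suc k"
    by simp
  finally show ?case .
qed

lemma summable_mat_exp_series:
  assumes "i \<in> {1..N-1}"
  shows "summable (\<lambda>k. norm (mat_pow N A k i j / fact k))"
proof -
  obtain c where c: "0 \<le> c" "\<forall>i\<in>{1..N-1}. \<forall>l\<in>{1..N-1}. \<bar>A i l\<bar> \<le> c"
    using mat_entries_bounded by blast
  let ?K = "real (N-1) * c"
  have "\<bar>mat_pow N A k i j\<bar> \<le> ?K ^ k" for k
    using mat_pow_abs_le[of N A c i k j] c assms by simp
  then show ?thesis
    by (intro summable_comparison_test[OF _ summable_exp[of ?K]]) (auto simp: divide_simps)
qed

lemma mat_exp_add_diag:
  assumes AB: "\<And>i l. i \<in> {1..N-1} \<Longrightarrow> A i l = B i l + (if i = l then e else 0)"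
    and i: "i \<in> {1..N-1}"
  shows "mat_exp N A i j = exp e * mat_exp N B i j"
proof -
  have summable_exp_series: "summable (\<lambda>p. norm (e^p / fact p))"
    using summable_norm_exp[of e] by (simp add: divide_simps)
  have exp_series: "exp e = (\<Sum>p. e^p / fact p)"
    using exp_converges[of e] by (simp add: sums_iff divide_simps)
  have "exp e * mat_exp N B i j =
      (\<Sum>k. \<Sum>p\<le>k. e^p / fact p * (mat_pow N B (k - p) i j / fact (k - p)))"
    unfolding exp_series mat_exp_def
    by (rule Cauchy_product[OF summable_exp_series summable_mat_exp_series[OF i]])
  also have "\<dots> = (\<Sum>k. mat_pow N A k i j / fact k)"
  proof (intro suminf_cong)
    fix k
    have "(\<Sum>p\<le>k. e^p / fact p * (mat_pow N B (k - p) i j / fact (k - p))) =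
        (\<Sum>p\<le>k. of_nat (k choose p) * e^p * mat_pow N B (k - p) i j) / fact k"
      unfolding sum_divide_distrib
    proof (intro sum.cong refl)
      fix p assume "p \<in> {..k}"
      then have "fact p * fact (k - p) * real (k choose p) = fact k"
        using binomial_fact_lemma[of p k] by (metis atMost_iff of_nat_fact of_nat_mult)
      then show "e^p / fact p * (mat_pow N B (k - p) i j / fact (k - p)) =
          of_nat (k choose p) * e^p * mat_pow N B (k - p) i j / fact k"
        by (auto simp: field_simps)
    qed
    also have "\<dots> = mat_pow N A k i j / fact k"
      using mat_pow_add_diag[OF AB i] by simp
    finally show "(\<Sum>p\<le>k. e^p / fact p * (mat_pow N B (k - p) i j / fact (k - p))) =
        mat_pow N A k i j / fact k" .
  qed
  finally show ?thesis by (simp add: mat_exp_def)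
qed

lemma mat_pow_nonneg:
  assumes "\<And>i l. i \<in> {1..N-1} \<Longrightarrow> l \<in> {1..N-1} \<Longrightarrow> 0 \<le> B i l" and "i \<in> {1..N-1}"
  shows "0 \<le> mat_pow N B k i j"
  using assms(2)
proof (induction k arbitrary: i)
  case (Suc k)
  then show ?case
    using assms(1) by (auto simp: mat_mul_def intro!: sum_nonneg)
qed simp

lemma mat_exp_nonneg_if_offdiag_nonneg:
  assumes offdiag: "\<And>i l. i \<in> {1..N-1} \<Longrightarrow> l \<in> {1..N-1} \<Longrightarrow> i \<noteq> l \<Longrightarrow> 0 \<le> A i l"
    and i: "i \<in> {1..N-1}"
  shows "0 \<le> mat_exp N A i j"
proof -
  obtain c where c: "\<forall>i\<in>{1..N-1}. \<forall>l\<in>{1..N-1}. \<bar>A i l\<bar> \<le> c"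
    using mat_entries_bounded by blast
  define B where "B i l = A i l + (if i = l then c else 0)" for i l
  have B_nonneg: "0 \<le> B i l" if "i \<in> {1..N-1}" "l \<in> {1..N-1}" for i l
    using offdiag[OF that] c that by (fastforce simp: B_def)
  have "mat_exp N A i j = exp (- c) * mat_exp N B i j"
    by (rule mat_exp_add_diag[OF _ i]) (simp add: B_def)
  moreover have "0 \<le> mat_exp N B i j"
    unfolding mat_exp_def
    using summable_mat_exp_series[OF i, of B j] mat_pow_nonneg[OF B_nonneg i]
    by (intro suminf_nonneg) (auto simp: summable_norm_cancel)
  ultimately show ?thesis by simp
qed

lemma LT_nonneg:
  assumes "T > 0" and "\<forall>x\<in>{0..1}. u0 x \<ge> 0"
  shows "0 \<le> LT N M T g u0 w m n"
proof (induction m arbitrary: n)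
  case 0
  show ?case
  proof (cases "1 \<le> n \<and> n \<le> N - 1")
    case True
    then have "real n / real N \<in> {0..1}" by (auto simp: field_simps)
    with True assms(2) show ?thesis by simp
  qed auto
next
  case (Suc m)
  have heat_nonneg: "0 \<le> mat_exp N (\<lambda>i j. T / real M * (real N)\<^sup>2 * DN N i j) n j"
    if "n \<in> {1..N-1}" for j
    using assms(1) that by (intro mat_exp_nonneg_if_offdiag_nonneg) (auto simp: DN_def)
  show ?case
    unfolding LT.simps Let_def mat_vec_def
    using heat_nonneg Suc.IH by (auto intro!: sum_nonneg mult_nonneg_nonneg)
qed

theorem proposition3p1:
  fixes P :: "'a measure" and F :: "real \<Rightarrow> 'a measure"
    and W :: "real \<Rightarrow> real \<Rightarrow> 'a \<Rightarrow> real"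
    and g u0 :: "real \<Rightarrow> real" and M N :: nat and T :: real
  assumes "prob_space P"
    and "adapted_brownian_sheet P F T W"
    and "T > 0" and "M \<ge> 1" and "N \<ge> 1"
    and "\<forall>x. g differentiable (at x)" and "continuous_on UNIV (deriv g)"
    and "\<exists>L. \<forall>x y. \<bar>g x - g y\<bar> \<le> L * \<bar>x - y\<bar>"
    and "g 0 = 0"
    and "C3_on_unit u0" and "u0 0 = 0" and "u0 1 = 0"
    and "\<forall>x\<in>{0..1}. u0 x \<ge> 0"
  shows "AE \<omega> in P. \<forall>m\<in>{1..M}. \<forall>n\<in>{1..N-1}.
           LT N M T g u0 (\<lambda>t x. W t x \<omega>) m n \<ge> 0"
  using LT_nonneg[OF assms(3) assms(13)] by (intro AE_I2) blast

end
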